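(* Let $A$ and $B$ be two physical systems with Hamiltonians $H^A=\sum_{x=1}^m a_x|x\rangle\langle x|^A$ and $H^B=\sum_{y=1}^n b_y|y\rangle\langle y|^B$ that are relatively non-degenerate. Then a quantum channel $\mathcal{N}:A\to B$ is time-translation covariant if and only if $$\mathcal{N}^{A\to B}=\Delta^{B\to B}\circ\mathcal{N}^{A\to B}\circ\Delta^{A\to A},$$ where $\Delta^{A\to A}(\rho)=\sum_{x=1}^m\langle x|\rho|x\rangle|x\rangle\langle x|$ and $\Delta^{B\to B}(\rho)=\sum_{y=1}^n\langle y|\rho|y\rangle|y\rangle\langle y|$ are the completely dephasing channels in the energy eigenbases.
   Context: The Hamiltonians are relatively non-degenerate if for all $x,x'\in[m]$ and $y,y'\in[n]$, $a_x-a_{x'}=b_y-b_{y'}$ implies $x=x'$ and $y=y'$ (in particular both are non-degenerate, so the eigenbases are unique up to phases). A channel (CPTP map) $\mathcal{E}:A\to B$ is time-translation covariant if $\mathcal{E}(e^{-iH^At}\rho e^{iH^At})=e^{-iH^Bt}\mathcal{E}(\rho)e^{iH^Bt}$ for all $t\in\mathbb{R}$ and all density matrices $\rho$ on $A$. *)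

theory Defs
  imports "Jordan_Normal_Form.Matrix"
begin

(* Operators on a d-dimensional Hilbert space are complex d x d matrices,
   written in the energy eigenbasis |0>,...,|d-1>. *)

definition psd :: "nat \<Rightarrow> complex mat \<Rightarrow> bool" where
  "psd d X \<longleftrightarrow> X \<in> carrier_mat d d
     \<and> (\<forall>i<d. \<forall>j<d. X $$ (j, i) = cnj (X $$ (i, j)))
     \<and> (\<forall>v :: nat \<Rightarrow> complex.
           0 \<le> Re (\<Sum>i<d. \<Sum>j<d. cnj (v i) * X $$ (i, j) * v j))"

definition tr :: "complex mat \<Rightarrow> complex" where
  "tr X = (\<Sum>i<dim_row X. X $$ (i, i))"

definition density :: "nat \<Rightarrow> complex mat \<Rightarrow> bool" where
  "density d \<rho> \<longleftrightarrow> psd d \<rho> \<and> tr \<rho> = 1"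

definition adj :: "complex mat \<Rightarrow> complex mat" where
  "adj U = mat (dim_col U) (dim_row U) (\<lambda>(i, j). cnj (U $$ (j, i)))"

definition hamiltonian :: "nat \<Rightarrow> (nat \<Rightarrow> real) \<Rightarrow> complex mat" where
  "hamiltonian d e = mat d d (\<lambda>(i, j). if i = j then complex_of_real (e i) else 0)"

definition evol :: "nat \<Rightarrow> (nat \<Rightarrow> real) \<Rightarrow> real \<Rightarrow> complex mat" where
  "evol d e t = mat d d (\<lambda>(i, j). if i = j then exp (- \<i> * complex_of_real (e i * t)) else 0)"

definition linear_map :: "nat \<Rightarrow> nat \<Rightarrow> (complex mat \<Rightarrow> complex mat) \<Rightarrow> bool" where
  "linear_map m n N \<longleftrightarrow>
     (\<forall>X \<in> carrier_mat m m. N X \<in> carrier_mat n n)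
   \<and> (\<forall>X \<in> carrier_mat m m. \<forall>Y \<in> carrier_mat m m. N (X + Y) = N X + N Y)
   \<and> (\<forall>c. \<forall>X \<in> carrier_mat m m. N (c \<cdot>\<^sub>m X) = c \<cdot>\<^sub>m N X)"

(* id_k \<otimes> N acting on a (k*m) x (k*m) matrix viewed as k x k blocks of m x m matrices *)
definition ampliate :: "nat \<Rightarrow> nat \<Rightarrow> nat \<Rightarrow> (complex mat \<Rightarrow> complex mat) \<Rightarrow> complex mat \<Rightarrow> complex mat" where
  "ampliate k m n N X = mat (k * n) (k * n) (\<lambda>(p, q).
      N (mat m m (\<lambda>(r, s). X $$ ((p div n) * m + r, (q div n) * m + s))) $$ (p mod n, q mod n))"

definition completely_positive :: "nat \<Rightarrow> nat \<Rightarrow> (complex mat \<Rightarrow> complex mat) \<Rightarrow> bool" where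
  "completely_positive m n N \<longleftrightarrow>
     (\<forall>k X. psd (k * m) X \<longrightarrow> psd (k * n) (ampliate k m n N X))"

definition trace_preserving :: "nat \<Rightarrow> (complex mat \<Rightarrow> complex mat) \<Rightarrow> bool" where
  "trace_preserving m N \<longleftrightarrow> (\<forall>X \<in> carrier_mat m m. tr (N X) = tr X)"

definition channel :: "nat \<Rightarrow> nat \<Rightarrow> (complex mat \<Rightarrow> complex mat) \<Rightarrow> bool" where
  "channel m n N \<longleftrightarrow> linear_map m n N \<and> completely_positive m n N \<and> trace_preserving m N"

definition rel_nondegenerate :: "nat \<Rightarrow> (nat \<Rightarrow> real) \<Rightarrow> nat \<Rightarrow> (nat \<Rightarrow> real) \<Rightarrow> bool" where
  "rel_nondegenerate m a n b \<longleftrightarrow>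
     (\<forall>x<m. \<forall>x'<m. \<forall>y<n. \<forall>y'<n. a x - a x' = b y - b y' \<longrightarrow> x = x' \<and> y = y')"

definition time_covariant ::
  "nat \<Rightarrow> (nat \<Rightarrow> real) \<Rightarrow> nat \<Rightarrow> (nat \<Rightarrow> real) \<Rightarrow> (complex mat \<Rightarrow> complex mat) \<Rightarrow> bool" where
  "time_covariant m a n b N \<longleftrightarrow>
     (\<forall>t::real. \<forall>\<rho>. density m \<rho> \<longrightarrow>
        N (evol m a t * \<rho> * adj (evol m a t)) = evol n b t * N \<rho> * adj (evol n b t))"

definition dephase :: "nat \<Rightarrow> complex mat \<Rightarrow> complex mat" where
  "dephase d \<rho> = mat d d (\<lambda>(i, j). if i = j then \<rho> $$ (i, i) else 0)"

end

theory Submission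
  imports Defs
begin

text \<open>
  Expanding \<open>N\<close> in the matrix units gives \<open>N(X)[y,y'] = \<Sum> x x'. X[x,x'] * c(x,x',y,y')\<close>,
  where \<open>c(x,x',y,y') = N(|x\<rangle>\<langle>x'|)[y,y']\<close> are the entries of the Choi matrix of \<open>N\<close>.
  Conjugation by \<open>exp(-iHt)\<close> multiplies \<open>X[x,x']\<close> by \<open>exp(i(a x' - a x)t)\<close>, so covariance
  says that, for fixed \<open>y, y', t\<close>, the functional
  \<open>\<rho> \<mapsto> \<Sum> x x'. (exp(i(a x' - a x)t) - exp(i(b y' - b y)t)) * c(x,x',y,y') * \<rho>[x,x']\<close>
  vanishes on all states. By polarization pure states determine such a functional, so every
  coefficient vanishes; a nonzero \<open>c(x,x',y,y')\<close> therefore forces the Bohr frequencies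
  \<open>a x' - a x\<close> and \<open>b y' - b y\<close> to agree, i.e. \<open>x = x'\<close> and \<open>y = y'\<close> by relative
  non-degeneracy. Conversely, if the Choi matrix is diagonal every phase factor is \<open>1\<close>.
  Finally, \<open>N = \<Delta> \<circ> N \<circ> \<Delta>\<close> says precisely that the Choi matrix is diagonal.
\<close>

definition outer_mat :: "nat \<Rightarrow> (nat \<Rightarrow> complex) \<Rightarrow> complex mat" where
  "outer_mat d w = mat d d (\<lambda>(i, j). w i * cnj (w j))"

lemma psd_outer_mat: "psd d (outer_mat d w)"
proof -
  have "0 \<le> Re (\<Sum>i<d. \<Sum>j<d. cnj (v i) * outer_mat d w $$ (i, j) * v j)" for v
  proof -
    let ?z = "\<Sum>i<d. cnj (v i) * w i"
    have "(\<Sum>i<d. \<Sum>j<d. cnj (v i) * outer_mat d w $$ (i, j) * v j) = ?z * cnj ?z"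
      unfolding cnj_sum sum_product by (simp add: outer_mat_def mult_ac)
    then show ?thesis
      unfolding complex_mult_cnj Re_complex_of_real by simp
  qed
  then show ?thesis
    by (auto simp: psd_def outer_mat_def)
qed

lemma quadratic_form_zero_if_pairing_vanishes_on_density:
  fixes K :: "nat \<Rightarrow> nat \<Rightarrow> complex"
  assumes vanish: "\<And>\<rho>. density d \<rho> \<Longrightarrow> (\<Sum>i<d. \<Sum>j<d. K i j * \<rho> $$ (i, j)) = 0"
  shows "(\<Sum>i<d. \<Sum>j<d. K i j * (w i * cnj (w j))) = 0"
proof (cases "\<forall>i<d. w i = 0")
  case True
  then show ?thesis by simp
next
  case False
  then obtain k where "k < d" "w k \<noteq> 0" by blast
  define s where "s = (\<Sum>i<d. (cmod (w i))\<^sup>2)"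
  have "s > 0"
    unfolding s_def using \<open>k < d\<close> \<open>w k \<noteq> 0\<close> by (intro sum_pos2[of _ k]) auto
  have norm_sq: "(\<Sum>i<d. w i * cnj (w i)) = of_real s"
    unfolding s_def of_real_sum complex_norm_square ..
  define v where "v i = w i / of_real (sqrt s)" for i
  have v_outer: "v i * cnj (v j) = w i * cnj (w j) / of_real s" for i j
    using \<open>s > 0\<close> by (simp add: v_def power2_eq_square flip: of_real_mult)
  have "tr (outer_mat d v) = 1"
    using \<open>s > 0\<close> by (simp add: tr_def outer_mat_def v_outer norm_sq flip: sum_divide_distrib)
  then have "density d (outer_mat d v)"
    by (simp add: density_def psd_outer_mat)
  from vanish[OF this] have "(\<Sum>i<d. \<Sum>j<d. K i j * (w i * cnj (w j))) / of_real s = 0"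
    by (simp add: outer_mat_def v_outer sum_divide_distrib)
  then show ?thesis
    using \<open>s > 0\<close> by simp
qed

lemma sesquilinear_coeffs_zero_if_quadratic_form_zero:
  fixes K :: "nat \<Rightarrow> nat \<Rightarrow> complex"
  assumes form_zero: "\<And>w. (\<Sum>i<d. \<Sum>j<d. K i j * (w i * cnj (w j))) = 0"
    and "x < d" "x' < d"
  shows "K x x' = 0"
proof -
  have restrict: "(\<Sum>i<d. \<Sum>j<d. K i j * (w i * cnj (w j))) = (\<Sum>i\<in>S. \<Sum>j\<in>S. K i j * (w i * cnj (w j)))"
    if "S \<subseteq> {..<d}" "\<And>i. i \<notin> S \<Longrightarrow> w i = 0" for S w
    using that by (intro sum.mono_neutral_cong_right) (auto intro!: sum.mono_neutral_cong_right)
  have diag: "K z z = 0" if "z < d" for z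
    using form_zero[of "\<lambda>i. if i = z then 1 else 0"] restrict[of "{z}"] that by simp
  show ?thesis
  proof (cases "x = x'")
    case True
    then show ?thesis using diag \<open>x < d\<close> by simp
  next
    case False
    let ?w = "\<lambda>c i. if i = x then 1 else if i = x' then c else 0"
    have "K x x + K x x' * cnj c + K x' x * c + K x' x' * (c * cnj c) = 0" for c
      using form_zero[of "?w c"] restrict[of "{x, x'}" "?w c"] \<open>x < d\<close> \<open>x' < d\<close> False
      by (simp add: algebra_simps)
    from this[of 1] this[of \<i>] show ?thesis
      using diag \<open>x < d\<close> \<open>x' < d\<close> by (simp add: algebra_simps)
  qed
qed

lemma coeffs_zero_if_pairing_vanishes_on_density:
  fixes K :: "nat \<Rightarrow> nat \<Rightarrow> complex"
  assumes "\<And>\<rho>. density d \<rho> \<Longrightarrow> (\<Sum>i<d. \<Sum>j<d. K i j * \<rho> $$ (i, j)) = 0"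
    and "x < d" "x' < d"
  shows "K x x' = 0"
proof (rule sesquilinear_coeffs_zero_if_quadratic_form_zero[where K = K and d = d])
  show "(\<Sum>i<d. \<Sum>j<d. K i j * (w i * cnj (w j))) = 0" for w
    using assms(1) by (rule quadratic_form_zero_if_pairing_vanishes_on_density)
qed (use assms in auto)

lemma cis_frequency_unique:
  assumes "\<And>t. cis (\<alpha> * t) = cis (\<beta> * t)"
  shows "\<alpha> = \<beta>"
proof (rule ccontr)
  assume "\<alpha> \<noteq> \<beta>"
  define t where "t = pi / (\<alpha> - \<beta>)"
  have "\<alpha> * t = \<beta> * t + pi"
    using \<open>\<alpha> \<noteq> \<beta>\<close> by (simp add: t_def field_simps)
  then have "cis (\<alpha> * t) = - cis (\<beta> * t)"
    by (simp add: cis_mult[symmetric])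
  with assms[of t] show False
    by simp
qed

lemma evol_cis: "evol d e t = mat d d (\<lambda>(i, j). if i = j then cis (- (e i * t)) else 0)"
proof -
  have "exp (- \<i> * complex_of_real r) = cis (- r)" for r
    by (simp add: cis_conv_exp)
  then show ?thesis
    by (simp only: evol_def)
qed

lemma evol_conj:
  assumes "X \<in> carrier_mat d d"
  shows "evol d e t * X * adj (evol d e t) = mat d d (\<lambda>(i, j). cis ((e j - e i) * t) * X $$ (i, j))"
proof (rule eq_matI)
  fix i j assume "i < dim_row (mat d d (\<lambda>(i, j). cis ((e j - e i) * t) * X $$ (i, j)))"
    and "j < dim_col (mat d d (\<lambda>(i, j). cis ((e j - e i) * t) * X $$ (i, j)))"
  then have "i < d" "j < d" by auto
  have left: "(evol d e t * X) $$ (i, k) = cis (- (e i * t)) * X $$ (i, k)" if "k < d" for k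
    using assms \<open>i < d\<close> that
    by (simp add: evol_cis scalar_prod_def if_distrib if_distribR cong: if_cong)
  have "(evol d e t * X * adj (evol d e t)) $$ (i, j)
          = (\<Sum>k<d. (evol d e t * X) $$ (i, k) * (if k = j then cis (e j * t) else 0))"
    using assms \<open>i < d\<close> \<open>j < d\<close>
    by (auto simp: adj_def evol_cis scalar_prod_def cis_cnj atLeast0LessThan intro!: sum.cong)
  also have "\<dots> = cis (- (e i * t)) * X $$ (i, j) * cis (e j * t)"
    using \<open>j < d\<close> left by (simp add: if_distrib cong: if_cong)
  also have "\<dots> = cis ((e j - e i) * t) * X $$ (i, j)"
    by (simp add: cis_mult algebra_simps)
  finally show "(evol d e t * X * adj (evol d e t)) $$ (i, j)
      = mat d d (\<lambda>(i, j). cis ((e j - e i) * t) * X $$ (i, j)) $$ (i, j)"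
    using \<open>i < d\<close> \<open>j < d\<close> by simp
qed (use assms in \<open>auto simp: adj_def evol_def\<close>)

definition mat_unit :: "nat \<Rightarrow> nat \<times> nat \<Rightarrow> 'a :: zero_neq_one mat" where
  "mat_unit d p = mat d d (\<lambda>q. if q = p then 1 else 0)"

lemma mat_unit_carrier [simp]: "mat_unit d p \<in> carrier_mat d d"
  by (simp add: mat_unit_def)

lemma linear_map_zero:
  assumes "linear_map m n N"
  shows "N (0\<^sub>m m m) = 0\<^sub>m n n"
proof -
  have carrier: "N (0\<^sub>m m m) \<in> carrier_mat n n"
    using assms by (simp add: linear_map_def)
  have "N (0\<^sub>m m m) = N (0 \<cdot>\<^sub>m 0\<^sub>m m m)"
    by simp
  also have "\<dots> = 0 \<cdot>\<^sub>m N (0\<^sub>m m m)"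
    using assms zero_carrier_mat unfolding linear_map_def by blast
  also have "\<dots> = 0\<^sub>m n n"
    using carrier by (intro eq_matI) auto
  finally show ?thesis .
qed

lemma linear_map_entry_expansion:
  assumes lin: "linear_map m n N" and X: "X \<in> carrier_mat m m" and "y < n" "y' < n"
  shows "N X $$ (y, y') = (\<Sum>i<m. \<Sum>j<m. X $$ (i, j) * N (mat_unit m (i, j)) $$ (y, y'))"
proof -
  define restrict where "restrict S = mat m m (\<lambda>q. if q \<in> S then X $$ q else 0)" for S
  have restrict_carrier: "restrict S \<in> carrier_mat m m" for S
    by (simp add: restrict_def)
  have partial: "N (restrict S) $$ (y, y') = (\<Sum>p\<in>S. X $$ p * N (mat_unit m p) $$ (y, y'))"
    if "finite S" for S
    using that
  proof (induction S rule: finite_induct)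
    case empty
    have "restrict {} = 0\<^sub>m m m"
      by (auto simp: restrict_def)
    then show ?case
      using linear_map_zero[OF lin] \<open>y < n\<close> \<open>y' < n\<close> by simp
  next
    case (insert p S)
    have "restrict (insert p S) = restrict S + X $$ p \<cdot>\<^sub>m mat_unit m p"
      using insert.hyps by (auto simp: restrict_def mat_unit_def)
    then have "N (restrict (insert p S)) = N (restrict S) + X $$ p \<cdot>\<^sub>m N (mat_unit m p)"
      using lin restrict_carrier by (simp add: linear_map_def)
    moreover have "N (restrict S) \<in> carrier_mat n n" "N (mat_unit m p) \<in> carrier_mat n n"
      using lin restrict_carrier by (auto simp: linear_map_def)
    ultimately show ?case
      using insert \<open>y < n\<close> \<open>y' < n\<close> by simp
  qed
  have "restrict ({..<m} \<times> {..<m}) = X"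
    using X by (auto simp: restrict_def)
  then show ?thesis
    using partial[of "{..<m} \<times> {..<m}"] by (simp add: sum.cartesian_product)
qed

lemma covariance_defect_expansion:
  assumes lin: "linear_map m n N" and X: "X \<in> carrier_mat m m" and "y < n" "y' < n"
  shows "N (evol m a t * X * adj (evol m a t)) $$ (y, y') - (evol n b t * N X * adj (evol n b t)) $$ (y, y')
    = (\<Sum>i<m. \<Sum>j<m. (cis ((a j - a i) * t) - cis ((b y' - b y) * t))
                        * N (mat_unit m (i, j)) $$ (y, y') * X $$ (i, j))"
proof -
  have NX: "N X \<in> carrier_mat n n"
    using lin X by (simp add: linear_map_def)
  have "N (evol m a t * X * adj (evol m a t)) $$ (y, y')
      = (\<Sum>i<m. \<Sum>j<m. cis ((a j - a i) * t) * X $$ (i, j) * N (mat_unit m (i, j)) $$ (y, y'))"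
    unfolding evol_conj[OF X] using assms
    by (subst linear_map_entry_expansion[OF lin]) auto
  moreover have "(evol n b t * N X * adj (evol n b t)) $$ (y, y')
      = cis ((b y' - b y) * t) * (\<Sum>i<m. \<Sum>j<m. X $$ (i, j) * N (mat_unit m (i, j)) $$ (y, y'))"
    unfolding evol_conj[OF NX] using assms by (simp add: linear_map_entry_expansion)
  ultimately show ?thesis
    by (simp add: sum_subtractf sum_distrib_left algebra_simps)
qed

definition choi_diagonal :: "nat \<Rightarrow> nat \<Rightarrow> (complex mat \<Rightarrow> complex mat) \<Rightarrow> bool" where
  "choi_diagonal m n N \<longleftrightarrow>
     (\<forall>x<m. \<forall>x'<m. \<forall>y<n. \<forall>y'<n. N (mat_unit m (x, x')) $$ (y, y') \<noteq> 0 \<longrightarrow> x = x' \<and> y = y')"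

lemma dephase_sandwich_iff_choi_diagonal:
  assumes lin: "linear_map m n N"
  shows "(\<forall>\<rho> \<in> carrier_mat m m. N \<rho> = dephase n (N (dephase m \<rho>))) \<longleftrightarrow> choi_diagonal m n N"
proof
  assume sandwich: "\<forall>\<rho> \<in> carrier_mat m m. N \<rho> = dephase n (N (dephase m \<rho>))"
  show "choi_diagonal m n N"
    unfolding choi_diagonal_def
  proof (intro allI impI)
    fix x x' y y'
    assume "x < m" "x' < m" "y < n" "y' < n" and nonzero: "N (mat_unit m (x, x')) $$ (y, y') \<noteq> 0"
    have "N (mat_unit m (x, x')) = dephase n (N (dephase m (mat_unit m (x, x'))))"
      by (rule bspec[OF sandwich]) simp
    then have unit_entry: "N (mat_unit m (x, x')) $$ (y, y')
        = (if y = y' then N (dephase m (mat_unit m (x, x'))) $$ (y, y) else 0)"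
      using \<open>y < n\<close> \<open>y' < n\<close> by (simp add: dephase_def)
    show "x = x' \<and> y = y'"
    proof (rule ccontr)
      assume "\<not> (x = x' \<and> y = y')"
      then consider "x \<noteq> x'" | "y \<noteq> y'"
        by blast
      then have "N (mat_unit m (x, x')) $$ (y, y') = 0"
      proof cases
        case 1
        then have "dephase m (mat_unit m (x, x')) = 0\<^sub>m m m"
          by (auto simp: dephase_def mat_unit_def)
        then show ?thesis
          using unit_entry linear_map_zero[OF lin] \<open>y < n\<close> by simp
      next
        case 2
        then show ?thesis
          using unit_entry by simp
      qed
      with nonzero show False ..
    qed
  qed
next
  assume diagonal: "choi_diagonal m n N"
  show "\<forall>\<rho> \<in> carrier_mat m m. N \<rho> = dephase n (N (dephase m \<rho>))"
  proof
    fix \<rho> :: "complex mat"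
    assume \<rho>: "\<rho> \<in> carrier_mat m m"
    have dephase_\<rho>: "dephase m \<rho> \<in> carrier_mat m m"
      by (simp add: dephase_def)
    show "N \<rho> = dephase n (N (dephase m \<rho>))"
    proof (rule eq_matI)
      fix y y' assume "y < dim_row (dephase n (N (dephase m \<rho>)))" "y' < dim_col (dephase n (N (dephase m \<rho>)))"
      then have "y < n" "y' < n"
        by (auto simp: dephase_def)
      let ?c = "\<lambda>i j. N (mat_unit m (i, j)) $$ (y, y')"
      have off_diagonal: "?c i j = 0" if "i < m" "j < m" "i \<noteq> j \<or> y \<noteq> y'" for i j
        using diagonal that \<open>y < n\<close> \<open>y' < n\<close> unfolding choi_diagonal_def by blast
      have "N \<rho> $$ (y, y') = (\<Sum>i<m. \<Sum>j<m. \<rho> $$ (i, j) * ?c i j)"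
        using linear_map_entry_expansion[OF lin \<rho> \<open>y < n\<close> \<open>y' < n\<close>] .
      also have "\<dots> = (\<Sum>i<m. \<Sum>j<m. dephase m \<rho> $$ (i, j) * ?c i j)"
        using off_diagonal by (intro sum.cong refl) (auto simp: dephase_def)
      also have "\<dots> = N (dephase m \<rho>) $$ (y, y')"
        using linear_map_entry_expansion[OF lin dephase_\<rho> \<open>y < n\<close> \<open>y' < n\<close>] ..
      also have "\<dots> = dephase n (N (dephase m \<rho>)) $$ (y, y')"
      proof (cases "y = y'")
        case False
        then have "(\<Sum>i<m. \<Sum>j<m. dephase m \<rho> $$ (i, j) * ?c i j) = 0"
          using off_diagonal by simp
        then show ?thesis
          using linear_map_entry_expansion[OF lin dephase_\<rho> \<open>y < n\<close> \<open>y' < n\<close>] False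
            \<open>y < n\<close> \<open>y' < n\<close> by (simp add: dephase_def)
      qed (use \<open>y < n\<close> in \<open>simp add: dephase_def\<close>)
      finally show "N \<rho> $$ (y, y') = dephase n (N (dephase m \<rho>)) $$ (y, y')" .
    qed (use lin \<rho> in \<open>auto simp: dephase_def linear_map_def\<close>)
  qed
qed

lemma time_covariant_if_choi_diagonal:
  assumes lin: "linear_map m n N" and diagonal: "choi_diagonal m n N"
  shows "time_covariant m a n b N"
  unfolding time_covariant_def
proof (intro allI impI)
  fix t \<rho> assume "density m \<rho>"
  then have \<rho>: "\<rho> \<in> carrier_mat m m"
    by (simp add: density_def psd_def)
  have N\<rho>: "N \<rho> \<in> carrier_mat n n"
    using lin \<rho> by (simp add: linear_map_def)
  have N_evol_\<rho>: "N (evol m a t * \<rho> * adj (evol m a t)) \<in> carrier_mat n n"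
    using lin by (simp add: evol_conj[OF \<rho>] linear_map_def)
  show "N (evol m a t * \<rho> * adj (evol m a t)) = evol n b t * N \<rho> * adj (evol n b t)"
    unfolding evol_conj[OF N\<rho>]
  proof (rule eq_matI)
    fix y y' assume "y < dim_row (mat n n (\<lambda>(i, j). cis ((b j - b i) * t) * N \<rho> $$ (i, j)))"
      "y' < dim_col (mat n n (\<lambda>(i, j). cis ((b j - b i) * t) * N \<rho> $$ (i, j)))"
    then have "y < n" "y' < n"
      by auto
    have "(cis ((a j - a i) * t) - cis ((b y' - b y) * t)) * N (mat_unit m (i, j)) $$ (y, y') = 0"
      if "i < m" "j < m" for i j
      using diagonal that \<open>y < n\<close> \<open>y' < n\<close> unfolding choi_diagonal_def by fastforce
    then have "(\<Sum>i<m. \<Sum>j<m. (cis ((a j - a i) * t) - cis ((b y' - b y) * t))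
                        * N (mat_unit m (i, j)) $$ (y, y') * \<rho> $$ (i, j)) = 0"
      by (simp add: sum.neutral)
    then show "N (evol m a t * \<rho> * adj (evol m a t)) $$ (y, y')
        = mat n n (\<lambda>(i, j). cis ((b j - b i) * t) * N \<rho> $$ (i, j)) $$ (y, y')"
      using covariance_defect_expansion[OF lin \<rho> \<open>y < n\<close> \<open>y' < n\<close>, of a t b]
      unfolding evol_conj[OF N\<rho>] by simp
  qed (use N_evol_\<rho> in auto)
qed

lemma choi_diagonal_if_time_covariant:
  assumes lin: "linear_map m n N" and nondegenerate: "rel_nondegenerate m a n b"
    and covariant: "time_covariant m a n b N"
  shows "choi_diagonal m n N"
  unfolding choi_diagonal_def
proof (intro allI impI)
  fix x x' y y'
  assume "x < m" "x' < m" "y < n" "y' < n" and nonzero: "N (mat_unit m (x, x')) $$ (y, y') \<noteq> 0"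
  have "(cis ((a x' - a x) * t) - cis ((b y' - b y) * t)) * N (mat_unit m (x, x')) $$ (y, y') = 0" for t
  proof (rule coeffs_zero_if_pairing_vanishes_on_density
      [where K = "\<lambda>i j. (cis ((a j - a i) * t) - cis ((b y' - b y) * t)) * N (mat_unit m (i, j)) $$ (y, y')"])
    fix \<rho> assume "density m \<rho>"
    then have "\<rho> \<in> carrier_mat m m"
      by (simp add: density_def psd_def)
    with covariance_defect_expansion[OF lin this \<open>y < n\<close> \<open>y' < n\<close>, of a t b] covariant \<open>density m \<rho>\<close>
    show "(\<Sum>i<m. \<Sum>j<m. (cis ((a j - a i) * t) - cis ((b y' - b y) * t))
                        * N (mat_unit m (i, j)) $$ (y, y') * \<rho> $$ (i, j)) = 0"
      by (simp add: time_covariant_def)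
  qed (use \<open>x < m\<close> \<open>x' < m\<close> in auto)
  with nonzero have "cis ((a x' - a x) * t) = cis ((b y' - b y) * t)" for t
    by simp
  then have "a x' - a x = b y' - b y"
    by (rule cis_frequency_unique)
  then show "x = x' \<and> y = y'"
    using nondegenerate \<open>x < m\<close> \<open>x' < m\<close> \<open>y < n\<close> \<open>y' < n\<close>
    unfolding rel_nondegenerate_def by (metis (no_types))
qed

theorem theorem2:
  fixes m n :: nat and a b :: "nat \<Rightarrow> real" and N :: "complex mat \<Rightarrow> complex mat"
  assumes "rel_nondegenerate m a n b"
    and "channel m n N"
  shows "time_covariant m a n b N \<longleftrightarrow>
         (\<forall>\<rho> \<in> carrier_mat m m. N \<rho> = dephase n (N (dephase m \<rho>)))"
proof -
  have lin: "linear_map m n N"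
    using assms(2) by (simp add: channel_def)
  then have "time_covariant m a n b N \<longleftrightarrow> choi_diagonal m n N"
    using assms(1) choi_diagonal_if_time_covariant time_covariant_if_choi_diagonal by blast
  also have "\<dots> \<longleftrightarrow> (\<forall>\<rho> \<in> carrier_mat m m. N \<rho> = dephase n (N (dephase m \<rho>)))"
    using dephase_sandwich_iff_choi_diagonal[OF lin] by simp
  finally show ?thesis .
qed

end
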